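(* Let $g\ge0$, $n\ge1$, $G\in\mathbb{G}_{g,n}$, and let $T_1,\dots,T_k$ be rational tails of $G$. If $H$ is a connected vertex-induced subgraph of $G$ with $V(H)\subseteq\bigcup_{i=1}^kV(T_i)$, then either $H\subseteq T_i$ for some $i$, or $V(G)=V(T_\ell)\cup V(T_r)$ for some $\ell,r$.
   Context: $\mathbb{G}_{g,n}$ is the set of isomorphism classes of dual graphs of stable $n$-pointed curves of genus $g$: connected graphs with vertex genera and $n$ labelled legs, of total genus $g$, each vertex stable. A vertex-induced subgraph is determined by a vertex set and contains all edges with both ends in that set and all legs rooted there. A tail is a connected vertex-induced subgraph joined to its complement by exactly one edge; a rational tail is a tail of genus $0$ (a tree all of whose vertices have genus $0$). *)

theory Defs
  imports Main "HOL-Library.Multiset"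
begin

text \<open>A (dual) graph is given by a vertex set V, an edge set E, an endpoint map
  ends (each edge has a multiset of two endpoints; loops are {#v,v#}),
  a vertex genus map gen, and leg map leg: leg i is the vertex at which the
  leg labelled i (1 \<le> i \<le> n) is rooted.  Multiple edges and loops are allowed.\<close>

definition induced_edges :: "'e set \<Rightarrow> ('e \<Rightarrow> 'v multiset) \<Rightarrow> 'v set \<Rightarrow> 'e set" where
  "induced_edges E ends S = {e \<in> E. set_mset (ends e) \<subseteq> S}"

definition induced_adj :: "'e set \<Rightarrow> ('e \<Rightarrow> 'v multiset) \<Rightarrow> 'v set \<Rightarrow> ('v \<times> 'v) set" where
  "induced_adj E ends S = {(x, y). \<exists>e \<in> induced_edges E ends S. ends e = {#x, y#}}"

definition induced_connected :: "'v set \<Rightarrow> 'e set \<Rightarrow> ('e \<Rightarrow> 'v multiset) \<Rightarrow> 'v set \<Rightarrow> bool" where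
  "induced_connected V E ends S \<longleftrightarrow> S \<noteq> {} \<and> S \<subseteq> V \<and>
     (\<forall>x \<in> S. \<forall>y \<in> S. (x, y) \<in> (induced_adj E ends S)\<^sup>*)"

definition boundary_edges :: "'v set \<Rightarrow> 'e set \<Rightarrow> ('e \<Rightarrow> 'v multiset) \<Rightarrow> 'v set \<Rightarrow> 'e set" where
  "boundary_edges V E ends S = {e \<in> E. \<exists>x \<in> S. \<exists>y \<in> V - S. ends e = {#x, y#}}"

definition valence :: "'e set \<Rightarrow> ('e \<Rightarrow> 'v multiset) \<Rightarrow> (nat \<Rightarrow> 'v) \<Rightarrow> nat \<Rightarrow> 'v \<Rightarrow> nat" where
  "valence E ends leg n v = (\<Sum>e \<in> E. count (ends e) v) + card {i \<in> {1..n}. leg i = v}"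

text \<open>G is (a representative of) an element of G_{g,n}: a connected graph with
  vertex genera and n labelled legs, of total genus g, every vertex stable.\<close>
definition stable_graph :: "nat \<Rightarrow> nat \<Rightarrow> 'v set \<Rightarrow> 'e set \<Rightarrow> ('e \<Rightarrow> 'v multiset)
    \<Rightarrow> ('v \<Rightarrow> nat) \<Rightarrow> (nat \<Rightarrow> 'v) \<Rightarrow> bool" where
  "stable_graph g n V E ends gen leg \<longleftrightarrow>
     finite V \<and> finite E \<and>
     (\<forall>e \<in> E. size (ends e) = 2 \<and> set_mset (ends e) \<subseteq> V) \<and>
     (\<forall>i \<in> {1..n}. leg i \<in> V) \<and>
     induced_connected V E ends V \<and>
     int g = int (\<Sum>v \<in> V. gen v) + int (card E) - int (card V) + 1 \<and>
     (\<forall>v \<in> V. 2 * gen v + valence E ends leg n v > 2)"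

definition is_tail :: "'v set \<Rightarrow> 'e set \<Rightarrow> ('e \<Rightarrow> 'v multiset) \<Rightarrow> 'v set \<Rightarrow> bool" where
  "is_tail V E ends S \<longleftrightarrow> induced_connected V E ends S \<and> card (boundary_edges V E ends S) = 1"

text \<open>Genus of a connected vertex-induced subgraph: sum of vertex genera plus first Betti number.\<close>
definition sub_genus :: "'e set \<Rightarrow> ('e \<Rightarrow> 'v multiset) \<Rightarrow> ('v \<Rightarrow> nat) \<Rightarrow> 'v set \<Rightarrow> int" where
  "sub_genus E ends gen S = int (\<Sum>v \<in> S. gen v) + int (card (induced_edges E ends S)) - int (card S) + 1"

definition is_rational_tail :: "'v set \<Rightarrow> 'e set \<Rightarrow> ('e \<Rightarrow> 'v multiset) \<Rightarrow> ('v \<Rightarrow> nat) \<Rightarrow> 'v set \<Rightarrow> bool" where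
  "is_rational_tail V E ends gen S \<longleftrightarrow> is_tail V E ends S \<and> sub_genus E ends gen S = 0"

end

theory Submission
  imports Defs
begin

text \<open>Two tails T, T' of a connected graph either are nested or disjoint, or cover all
  vertices: if they overlap without nesting, the connectedness of T yields an edge of T
  leaving T', which must be the unique boundary edge of T'; symmetrically for T, so
  T \<union> T' has no boundary edge at all and hence is V.  The same conclusion holds when an
  edge joins T - T' to T' - T.  Now take a tail T_i meeting H that is maximal under
  inclusion; if H \<not>\<subseteq> T_i, an edge of H leaves T_i into some T_j, and one of the two
  situations above occurs.\<close>

lemma rtrancl_step_leaving:
  assumes "(x, y) \<in> R\<^sup>*" "x \<in> A" "y \<notin> A"
  shows "\<exists>u v. (u, v) \<in> R \<and> u \<in> A \<and> v \<notin> A"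
  using assms by (induction rule: rtrancl_induct) auto

lemma induced_connected_edge_leaving:
  assumes "induced_connected V E ends S" "x \<in> S" "x \<in> A" "y \<in> S" "y \<notin> A"
  obtains e u v where "e \<in> E" "ends e = {#u, v#}" "u \<in> S \<inter> A" "v \<in> S - A"
proof -
  have "(x, y) \<in> (induced_adj E ends S)\<^sup>*"
    using assms(1,2,4) unfolding induced_connected_def by blast
  then obtain u v where uv: "(u, v) \<in> induced_adj E ends S" "u \<in> A" "v \<notin> A"
    using rtrancl_step_leaving[OF _ assms(3,5)] by blast
  then obtain e where e: "e \<in> E" "ends e = {#u, v#}" "set_mset (ends e) \<subseteq> S"
    unfolding induced_adj_def induced_edges_def by blast
  show thesis
    by (rule that[OF e(1,2)]) (use e(2,3) uv(2,3) in auto)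
qed

lemma boundary_edge_not_inside:
  "e \<in> boundary_edges V E ends S \<Longrightarrow> \<not> set_mset (ends e) \<subseteq> S"
  unfolding boundary_edges_def by auto

lemma boundary_edges_Un_subset:
  "boundary_edges V E ends (S \<union> S') \<subseteq> boundary_edges V E ends S \<union> boundary_edges V E ends S'"
  unfolding boundary_edges_def by blast

lemma boundary_edges_empty_imp_eq:
  assumes "induced_connected V E ends V" "S \<subseteq> V" "S \<noteq> {}" "boundary_edges V E ends S = {}"
  shows "S = V"
proof (rule ccontr)
  assume "S \<noteq> V"
  then obtain y where y: "y \<in> V" "y \<notin> S" using assms(2) by blast
  obtain x where x: "x \<in> S" using assms(3) by blast
  with assms(2) have "x \<in> V" by blast
  then obtain e u v where "e \<in> E" "ends e = {#u, v#}" "u \<in> V \<inter> S" "v \<in> V - S"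
    by (rule induced_connected_edge_leaving[OF assms(1) _ x y])
  then have "e \<in> boundary_edges V E ends S" unfolding boundary_edges_def by blast
  then show False using assms(4) by blast
qed

lemma is_tail_subset: "is_tail V E ends T \<Longrightarrow> T \<subseteq> V \<and> T \<noteq> {}"
  unfolding is_tail_def induced_connected_def by blast

lemma is_tail_boundary_edges_eq:
  assumes "is_tail V E ends T" "e \<in> boundary_edges V E ends T"
  shows "boundary_edges V E ends T = {e}"
  using assms unfolding is_tail_def by (metis card_1_singletonE singletonD)

lemma tails_Un_eq_if_boundary_edges_inside:
  assumes conn: "induced_connected V E ends V"
    and T: "is_tail V E ends T" and T': "is_tail V E ends T'"
    and e: "e \<in> boundary_edges V E ends T" "set_mset (ends e) \<subseteq> T \<union> T'"
    and e': "e' \<in> boundary_edges V E ends T'" "set_mset (ends e') \<subseteq> T \<union> T'"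
  shows "T \<union> T' = V"
proof (rule boundary_edges_empty_imp_eq[OF conn])
  show "T \<union> T' \<subseteq> V" "T \<union> T' \<noteq> {}"
    using is_tail_subset[OF T] is_tail_subset[OF T'] by auto
  have "boundary_edges V E ends (T \<union> T') \<subseteq> {e, e'}"
    using boundary_edges_Un_subset[of V E ends T T']
    unfolding is_tail_boundary_edges_eq[OF T e(1)] is_tail_boundary_edges_eq[OF T' e'(1)] by auto
  moreover have "e \<notin> boundary_edges V E ends (T \<union> T')" "e' \<notin> boundary_edges V E ends (T \<union> T')"
    using e(2) e'(2) by (auto dest: boundary_edge_not_inside)
  ultimately show "boundary_edges V E ends (T \<union> T') = {}" by blast
qed

lemma tails_overlapping_Un_eq:
  assumes conn: "induced_connected V E ends V"
    and T: "is_tail V E ends T" and T': "is_tail V E ends T'"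
    and "T \<inter> T' \<noteq> {}" "\<not> T \<subseteq> T'" "\<not> T' \<subseteq> T"
  shows "T \<union> T' = V"
proof -
  have edge_leaving: "\<exists>e \<in> boundary_edges V E ends S'. set_mset (ends e) \<subseteq> S"
    if S: "is_tail V E ends S" and S': "is_tail V E ends S'"
      and overlap: "S \<inter> S' \<noteq> {}" and not_sub: "\<not> S \<subseteq> S'" for S S'
  proof -
    obtain x y where x: "x \<in> S" "x \<in> S'" and y: "y \<in> S" "y \<notin> S'"
      using overlap not_sub by blast
    have "induced_connected V E ends S" using S unfolding is_tail_def by blast
    then obtain e u v where e: "e \<in> E" "ends e = {#u, v#}" "u \<in> S \<inter> S'" "v \<in> S - S'"
      using x y by (rule induced_connected_edge_leaving)
    then have "e \<in> boundary_edges V E ends S'"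
      using is_tail_subset[OF S] unfolding boundary_edges_def by blast
    moreover have "set_mset (ends e) \<subseteq> S" using e by simp
    ultimately show ?thesis by blast
  qed
  obtain e where "e \<in> boundary_edges V E ends T'" "set_mset (ends e) \<subseteq> T"
    using edge_leaving[OF T T'] assms(4,5) by blast
  moreover obtain e' where "e' \<in> boundary_edges V E ends T" "set_mset (ends e') \<subseteq> T'"
    using edge_leaving[OF T' T] assms(4,6) by blast
  ultimately show ?thesis
    using tails_Un_eq_if_boundary_edges_inside[OF conn T T'] by blast
qed

lemma tails_joined_by_edge_Un_eq:
  assumes conn: "induced_connected V E ends V"
    and T: "is_tail V E ends T" and T': "is_tail V E ends T'"
    and e: "e \<in> E" "ends e = {#u, v#}" "u \<in> T - T'" "v \<in> T' - T"
  shows "T \<union> T' = V"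
proof -
  have "ends e = {#v, u#}" using e(2) by (simp add: add_mset_commute)
  then have "e \<in> boundary_edges V E ends T" "e \<in> boundary_edges V E ends T'"
    using e is_tail_subset[OF T] is_tail_subset[OF T'] unfolding boundary_edges_def by blast+
  moreover have "set_mset (ends e) \<subseteq> T \<union> T'" using e by auto
  ultimately show ?thesis
    using tails_Un_eq_if_boundary_edges_inside[OF conn T T'] by blast
qed

lemma connected_subset_Union_tails:
  assumes conn: "induced_connected V E ends V"
    and tails: "\<forall>i \<in> I. is_tail V E ends (T i)" and "finite I"
    and H: "induced_connected V E ends H" "H \<subseteq> (\<Union>i \<in> I. T i)"
  shows "(\<exists>i \<in> I. H \<subseteq> T i) \<or> (\<exists>l \<in> I. \<exists>r \<in> I. V = T l \<union> T r)"
proof (rule disjCI)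
  assume no_cover: "\<not> (\<exists>l \<in> I. \<exists>r \<in> I. V = T l \<union> T r)"
  define C where "C = {i \<in> I. T i \<inter> H \<noteq> {}}"
  obtain h0 where "h0 \<in> H" using H(1) unfolding induced_connected_def by blast
  with H(2) obtain i0 where "i0 \<in> C" unfolding C_def by blast
  moreover have "finite C" using \<open>finite I\<close> unfolding C_def by simp
  ultimately obtain S where "S \<in> T ` C" and S_max: "\<forall>S' \<in> T ` C. S \<subseteq> S' \<longrightarrow> S = S'"
    using finite_has_maximal[of "T ` C"] by blast
  then obtain i where "i \<in> C" "S = T i" by blast
  then have i_max: "\<forall>j \<in> C. T i \<subseteq> T j \<longrightarrow> T i = T j" and "i \<in> I" "T i \<inter> H \<noteq> {}"
    using S_max unfolding C_def by auto
  show "\<exists>i \<in> I. H \<subseteq> T i"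
  proof (rule ccontr)
    assume "\<not> (\<exists>i \<in> I. H \<subseteq> T i)"
    then obtain w where w: "w \<in> H" "w \<notin> T i" using \<open>i \<in> I\<close> by blast
    obtain h where h: "h \<in> H" "h \<in> T i" using \<open>T i \<inter> H \<noteq> {}\<close> by blast
    obtain e u v where e: "e \<in> E" "ends e = {#u, v#}" "u \<in> H \<inter> T i" "v \<in> H - T i"
      using h w by (rule induced_connected_edge_leaving[OF H(1)])
    then obtain j where "j \<in> I" "v \<in> T j" using H(2) by blast
    have Ti: "is_tail V E ends (T i)" and Tj: "is_tail V E ends (T j)"
      using tails \<open>i \<in> I\<close> \<open>j \<in> I\<close> by auto
    show False
    proof (cases "u \<in> T j")
      case True
      have "j \<in> C" using \<open>j \<in> I\<close> \<open>v \<in> T j\<close> e(4) unfolding C_def by blast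
      then have "\<not> T i \<subseteq> T j"
        using i_max \<open>v \<in> T j\<close> e(4) by blast
      then have "T i \<union> T j = V"
        using tails_overlapping_Un_eq[OF conn Ti Tj] True e(3,4) \<open>v \<in> T j\<close> by blast
      then show False using no_cover \<open>i \<in> I\<close> \<open>j \<in> I\<close> by blast
    next
      case False
      then have "T i \<union> T j = V"
        using tails_joined_by_edge_Un_eq[OF conn Ti Tj e(1,2)] e(3,4) \<open>v \<in> T j\<close> by blast
      then show False using no_cover \<open>i \<in> I\<close> \<open>j \<in> I\<close> by blast
    qed
  qed
qed

theorem lemma4p14:
  fixes g n k :: nat and V :: "'v set" and E :: "'e set" and ends :: "'e \<Rightarrow> 'v multiset"
    and gen :: "'v \<Rightarrow> nat" and leg :: "nat \<Rightarrow> 'v" and T :: "nat \<Rightarrow> 'v set" and H :: "'v set"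
  assumes "n \<ge> 1"
    and "stable_graph g n V E ends gen leg"
    and "\<forall>i \<in> {1..k}. is_rational_tail V E ends gen (T i)"
    and "induced_connected V E ends H"
    and "H \<subseteq> (\<Union>i \<in> {1..k}. T i)"
  shows "(\<exists>i \<in> {1..k}. H \<subseteq> T i) \<or> (\<exists>l \<in> {1..k}. \<exists>r \<in> {1..k}. V = T l \<union> T r)"
proof -
  have "induced_connected V E ends V"
    using assms(2) unfolding stable_graph_def by blast
  moreover have "\<forall>i \<in> {1..k}. is_tail V E ends (T i)"
    using assms(3) unfolding is_rational_tail_def by blast
  ultimately show ?thesis
    using connected_subset_Union_tails assms(4,5) by blast
qed

end
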